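(* Let $i_1>\dots>i_l$ with $i_1\le n-2$, and let $a_{n-1},a_{i_1},\dots,a_{i_l}$ be positive integers. A saturated homogeneous ideal $I\subseteq S$ with Hilbert polynomial $Q(n-1,i_1,\dots,i_l;a_{n-1},a_{i_1},\dots,a_{i_l})$ is Borel fixed if and only if $I=x_0^{a_{n-1}}J$ where $J$ is a Borel fixed (saturated) ideal with Hilbert polynomial $Q(i_1,\dots,i_l;a_{i_1},\dots,a_{i_l})$.
   Context: $k$ algebraically closed of characteristic $0$, $S=k[x_0,\dots,x_n]$. Notation $Q$: for integers $i_1>i_2>\dots>i_l\ge 0$ and positive integers $a_{i_1},\dots,a_{i_l}$, put $a_j=0$ for $j\notin\{i_1,\dots,i_l\}$, $m_i=\sum_{j\ge i}a_j$ for $0\le i\le i_1$, and $Q(i_1,\dots,i_l;a_{i_1},\dots,a_{i_l})(t)=\sum_{i=0}^{i_1}\left[\binom{t+i}{i+1}-\binom{t+i-m_i}{i+1}\right]$ (the Macaulay expansion; every Hilbert polynomial of a nonempty subscheme of projective space is uniquely of this form, with $Q=0$-free part $l\ge 0$). The Hilbert polynomial of $I$ means that of $S/I$. A monomial ideal $I$ is Borel fixed iff for every monomial $m\in I$ divisible by $x_j$ one has $m x_i/x_j\in I$ for all $i<j$ (equivalently it is fixed by the upper triangular matrices acting via $x_i\mapsto\sum_j a_{ij}x_j$). *)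

theory Defs
  imports "HOL-Library.Poly_Mapping" "HOL-Computational_Algebra.Polynomial"
begin

text \<open>S n = k[x_0,...,x_n] is the
  subset of polynomials whose monomials only involve variables x_0..x_n.\<close>

type_synonym 'k mpoly = "(nat \<Rightarrow>\<^sub>0 nat) \<Rightarrow>\<^sub>0 'k"

definition monom :: "'k::zero \<Rightarrow> (nat \<Rightarrow>\<^sub>0 nat) \<Rightarrow> 'k mpoly" where
  "monom c \<alpha> = Poly_Mapping.single \<alpha> c"

definition mdeg :: "(nat \<Rightarrow>\<^sub>0 nat) \<Rightarrow> nat" where
  "mdeg \<alpha> = (\<Sum>j\<in>Poly_Mapping.keys \<alpha>. Poly_Mapping.lookup \<alpha> j)"

definition Spoly :: "nat \<Rightarrow> ('k::zero) mpoly set" where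
  "Spoly n = {p. \<forall>\<alpha>\<in>Poly_Mapping.keys p. Poly_Mapping.keys \<alpha> \<subseteq> {..n}}"

definition Shom :: "nat \<Rightarrow> nat \<Rightarrow> ('k::zero) mpoly set" where
  "Shom n t = {p \<in> Spoly n. \<forall>\<alpha>\<in>Poly_Mapping.keys p. mdeg \<alpha> = t}"

definition hcomp :: "nat \<Rightarrow> ('k::comm_monoid_add) mpoly \<Rightarrow> 'k mpoly" where
  "hcomp d p = (\<Sum>\<alpha>\<in>{\<alpha>\<in>Poly_Mapping.keys p. mdeg \<alpha> = d}. monom (Poly_Mapping.lookup p \<alpha>) \<alpha>)"

definition is_ideal :: "nat \<Rightarrow> ('k::comm_ring_1) mpoly set \<Rightarrow> bool" where
  "is_ideal n I \<longleftrightarrow> I \<subseteq> Spoly n \<and> 0 \<in> I \<and> (\<forall>p\<in>I. \<forall>q\<in>I. p + q \<in> I)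
     \<and> (\<forall>f\<in>Spoly n. \<forall>p\<in>I. f * p \<in> I)"

definition homogeneous_ideal :: "nat \<Rightarrow> ('k::comm_ring_1) mpoly set \<Rightarrow> bool" where
  "homogeneous_ideal n I \<longleftrightarrow> is_ideal n I \<and> (\<forall>p\<in>I. \<forall>d. hcomp d p \<in> I)"

text \<open>Saturated: I = I : (x_0,...,x_n)^\<infinity>.\<close>
definition saturated :: "nat \<Rightarrow> ('k::comm_ring_1) mpoly set \<Rightarrow> bool" where
  "saturated n I \<longleftrightarrow> (\<forall>f\<in>Spoly n. (\<exists>N. \<forall>j\<le>n. monom 1 (Poly_Mapping.single j N) * f \<in> I) \<longrightarrow> f \<in> I)"

definition monomial_ideal :: "nat \<Rightarrow> ('k::comm_ring_1) mpoly set \<Rightarrow> bool" where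
  "monomial_ideal n I \<longleftrightarrow> is_ideal n I \<and> (\<forall>p\<in>I. \<forall>\<alpha>\<in>Poly_Mapping.keys p. monom 1 \<alpha> \<in> I)"

definition borel_fixed :: "nat \<Rightarrow> ('k::comm_ring_1) mpoly set \<Rightarrow> bool" where
  "borel_fixed n I \<longleftrightarrow> monomial_ideal n I \<and>
     (\<forall>\<alpha> i j. monom 1 \<alpha> \<in> I \<longrightarrow> i < j \<longrightarrow> 0 < Poly_Mapping.lookup \<alpha> j \<longrightarrow>
        monom 1 (\<alpha> - Poly_Mapping.single j 1 + Poly_Mapping.single i 1) \<in> I)"

definition lin_indep :: "('k::field) mpoly set \<Rightarrow> bool" where
  "lin_indep B \<longleftrightarrow> (\<forall>c. (\<Sum>b\<in>B. monom (c b) 0 * b) = 0 \<longrightarrow> (\<forall>b\<in>B. c b = 0))"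

definition kdim :: "('k::field) mpoly set \<Rightarrow> nat" where
  "kdim V = Max {card B | B. finite B \<and> B \<subseteq> V \<and> lin_indep B}"

text \<open>Hilbert function of S/I: dim_k (S/I)_t = dim_k S_t - dim_k I_t.\<close>
definition hilbert_fn :: "nat \<Rightarrow> ('k::field) mpoly set \<Rightarrow> nat \<Rightarrow> nat" where
  "hilbert_fn n I t = kdim (Shom n t :: 'k mpoly set) - kdim (I \<inter> Shom n t)"

definition has_hilbert_poly :: "nat \<Rightarrow> ('k::field) mpoly set \<Rightarrow> (nat \<Rightarrow> real) \<Rightarrow> bool" where
  "has_hilbert_poly n I P \<longleftrightarrow> (\<exists>t0. \<forall>t\<ge>t0. real (hilbert_fn n I t) = P t)"

text \<open>Macaulay data: list is = [i_1,...,i_l] (strictly decreasing), list as = [a_{i_1},...,a_{i_l}].\<close>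
definition macaulay_data :: "nat list \<Rightarrow> nat list \<Rightarrow> bool" where
  "macaulay_data is as \<longleftrightarrow> length is = length as \<and> sorted_wrt (>) is \<and> (\<forall>a\<in>set as. 0 < a)"

definition coefQ :: "nat list \<Rightarrow> nat list \<Rightarrow> nat \<Rightarrow> nat" where
  "coefQ is as j = (\<Sum>k<length is. if is ! k = j then as ! k else 0)"

definition mQ :: "nat list \<Rightarrow> nat list \<Rightarrow> nat \<Rightarrow> nat" where
  "mQ is as i = (\<Sum>j\<in>{i..hd is}. coefQ is as j)"

text \<open>Q(i_1,...,i_l; a_{i_1},...,a_{i_l})(t) (for l \<ge> 1, i_1 = hd is).\<close>
definition Qpoly :: "nat list \<Rightarrow> nat list \<Rightarrow> nat \<Rightarrow> real" where
  "Qpoly is as t = (\<Sum>i=0..hd is.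
      ((real t + real i) gchoose (i + 1)) - ((real t + real i - real (mQ is as i)) gchoose (i + 1)))"

end

(*
  If a Borel-fixed ideal I contains a monomial x^alpha with alpha_0 < A, Borel moves put
  x_0^D and x_0^(alpha_0) x_1^(D - alpha_0) into I, where D = deg alpha.  Hence in degree t
  every monomial outside I has x_0-exponent below alpha_0 or both x_0- and x_1-exponents
  below D, and the Hilbert function of S/I is at most N(t) - N(t - alpha_0) + O(t^(n-2)),
  where N(t) = (t + n choose n) counts the monomials of degree t.  On the other hand the
  Hilbert polynomial Q(n-1, i_1, ...; A, a_(i_1), ...) equals N(t) - N(t - A) + Q'(t - A)
  with Q' = Q(i_1, ...; a_(i_1), ...) of degree i_1 <= n - 2, and N(t - alpha_0) - N(t - A)
  grows like t^(n-1): a contradiction.  So x_0^A divides every monomial of I, I = x_0^A J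
  for J = I : x_0^A, and J inherits saturation and Borel fixedness; its monomials of
  degree s correspond to those of I of degree s + A, which shifts the Hilbert polynomial
  to Q'.  The converse holds because multiplying by x_0^A commutes with Borel moves.
*)
theory Submission
  imports Defs "HOL-Library.Multiset" "HOL-Library.FuncSet"
begin

lemma monom_mult: "monom (a::'k::comm_semiring_1) \<alpha> * monom b \<beta> = monom (a * b) (\<alpha> + \<beta>)"
  by (simp add: monom_def mult_single)

lemma monom_add: "monom (a + b) \<alpha> = monom a \<alpha> + (monom b \<alpha> :: 'k::comm_monoid_add mpoly)"
  by (simp add: monom_def single_add)

lemma keys_monom: "Poly_Mapping.keys (monom c \<alpha>) = (if c = 0 then {} else {\<alpha>})"
  by (simp add: monom_def)

lemma lookup_monom: "Poly_Mapping.lookup (monom c \<alpha>) \<beta> = (if \<beta> = \<alpha> then c else 0)"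
  by (simp add: monom_def lookup_single when_def)

lemma inj_monom_1: "inj (monom (1::'k::zero_neq_one))"
  by (rule injI) (metis monom_def lookup_single_eq lookup_single_not_eq zero_neq_one)

lemma lookup_monom_mult:
  fixes p :: "'k::comm_semiring_1 mpoly"
  shows "Poly_Mapping.lookup (monom c \<alpha> * p) \<gamma> =
    (if \<exists>\<beta>. \<gamma> = \<alpha> + \<beta> then c * Poly_Mapping.lookup p (\<gamma> - \<alpha>) else 0)"
proof -
  have "Poly_Mapping.lookup (monom c \<alpha> * p) \<gamma> =
     (\<Sum>l. (c * (\<Sum>q. Poly_Mapping.lookup p q when \<gamma> = l + q)) when \<alpha> = l)"
    by (simp add: lookup_mult monom_def lookup_single when_mult)
  also have "\<dots> = c * (\<Sum>q. Poly_Mapping.lookup p q when \<gamma> = \<alpha> + q)"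
    by simp
  also have "(\<lambda>q. Poly_Mapping.lookup p q when \<gamma> = \<alpha> + q) =
      (\<lambda>q. if \<exists>\<beta>. \<gamma> = \<alpha> + \<beta> then Poly_Mapping.lookup p q when q = \<gamma> - \<alpha> else 0)"
    by (auto simp: when_def fun_eq_iff)
  finally show ?thesis
    by (cases "\<exists>\<beta>. \<gamma> = \<alpha> + \<beta>") simp_all
qed

lemma keys_monom_1_mult:
  fixes p :: "'k::comm_semiring_1 mpoly"
  shows "Poly_Mapping.keys (monom 1 \<alpha> * p) = (\<lambda>\<beta>. \<alpha> + \<beta>) ` Poly_Mapping.keys p"
proof -
  have "\<gamma> \<in> Poly_Mapping.keys (monom 1 \<alpha> * p) \<longleftrightarrow> (\<exists>\<beta>\<in>Poly_Mapping.keys p. \<gamma> = \<alpha> + \<beta>)" for \<gamma>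
    by (cases "\<exists>\<beta>. \<gamma> = \<alpha> + \<beta>") (auto simp: in_keys_iff lookup_monom_mult)
  then show ?thesis
    by blast
qed

lemma sum_monom_keys:
  fixes p :: "'k::comm_monoid_add mpoly"
  shows "(\<Sum>\<alpha>\<in>Poly_Mapping.keys p. monom (Poly_Mapping.lookup p \<alpha>) \<alpha>) = p"
  by (rule poly_mapping_eqI) (simp add: lookup_sum lookup_monom sum.delta in_keys_iff)

lemma mdeg_superset:
  assumes "finite K" "Poly_Mapping.keys \<alpha> \<subseteq> K"
  shows "mdeg \<alpha> = (\<Sum>j\<in>K. Poly_Mapping.lookup \<alpha> j)"
  unfolding mdeg_def
  by (rule sum.mono_neutral_left) (use assms in \<open>auto simp: in_keys_iff\<close>)

lemma mdeg_atMost: "Poly_Mapping.keys \<alpha> \<subseteq> {..n} \<Longrightarrow> mdeg \<alpha> = (\<Sum>j\<le>n. Poly_Mapping.lookup \<alpha> j)"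
  by (rule mdeg_superset) auto

lemma mdeg_add: "mdeg (\<alpha> + \<beta>) = mdeg \<alpha> + mdeg \<beta>"
proof -
  let ?K = "Poly_Mapping.keys \<alpha> \<union> Poly_Mapping.keys \<beta>"
  have "mdeg (\<alpha> + \<beta>) = (\<Sum>j\<in>?K. Poly_Mapping.lookup (\<alpha> + \<beta>) j)"
    by (rule mdeg_superset) (auto dest: subsetD[OF keys_add])
  also have "\<dots> = mdeg \<alpha> + mdeg \<beta>"
    by (simp add: lookup_add sum.distrib mdeg_superset[symmetric])
  finally show ?thesis .
qed

lemma mdeg_single [simp]: "mdeg (Poly_Mapping.single j k) = k"
  by (simp add: mdeg_def)

lemma lookup_le_mdeg: "Poly_Mapping.lookup \<alpha> j \<le> mdeg \<alpha>"
  by (cases "j \<in> Poly_Mapping.keys \<alpha>") (auto simp: mdeg_def in_keys_iff intro: member_le_sum)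

lemma lookup_beyond_keys:
  "Poly_Mapping.keys (\<alpha>::nat \<Rightarrow>\<^sub>0 nat) \<subseteq> {..n} \<Longrightarrow> n < j \<Longrightarrow> Poly_Mapping.lookup \<alpha> j = 0"
  by (metis atMost_iff in_keys_iff leD subsetD)

lemma keys_diff_subset: "Poly_Mapping.keys (\<alpha> - \<gamma>) \<subseteq> Poly_Mapping.keys (\<alpha>::nat \<Rightarrow>\<^sub>0 nat)"
  by (auto simp: in_keys_iff lookup_minus)

text \<open>\<open>x^\<gamma>\<close> divides \<open>x^\<alpha>\<close>. (The library's order on exponent vectors is lexicographic.)\<close>
definition exp_dvd :: "(nat \<Rightarrow>\<^sub>0 nat) \<Rightarrow> (nat \<Rightarrow>\<^sub>0 nat) \<Rightarrow> bool" where
  "exp_dvd \<gamma> \<alpha> \<longleftrightarrow> (\<forall>j. Poly_Mapping.lookup \<gamma> j \<le> Poly_Mapping.lookup \<alpha> j)"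

lemma exp_dvd_add_diff: "exp_dvd \<gamma> \<alpha> \<Longrightarrow> \<gamma> + (\<alpha> - \<gamma>) = \<alpha>"
  by (rule poly_mapping_eqI) (simp add: exp_dvd_def lookup_add lookup_minus)

lemma mdeg_diff: "exp_dvd \<gamma> \<alpha> \<Longrightarrow> mdeg (\<alpha> - \<gamma>) = mdeg \<alpha> - mdeg \<gamma>"
  using mdeg_add[of \<gamma> "\<alpha> - \<gamma>"] exp_dvd_add_diff[of \<gamma> \<alpha>] by simp

lemma exp_dvd_single_iff: "exp_dvd (Poly_Mapping.single j a) \<alpha> \<longleftrightarrow> a \<le> Poly_Mapping.lookup \<alpha> j"
  by (auto simp: exp_dvd_def lookup_single when_def)


lemma monom_in_Spoly: "Poly_Mapping.keys \<alpha> \<subseteq> {..n} \<Longrightarrow> monom c \<alpha> \<in> Spoly n"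
  by (simp add: Spoly_def keys_monom)

lemma monom_1_in_Spoly_iff:
  "monom (1::'k::zero_neq_one) \<alpha> \<in> Spoly n \<longleftrightarrow> Poly_Mapping.keys \<alpha> \<subseteq> {..n}"
  by (simp add: Spoly_def keys_monom)

lemma zero_in_Spoly: "0 \<in> Spoly n"
  by (simp add: Spoly_def)

lemma Spoly_add: "p \<in> Spoly n \<Longrightarrow> q \<in> Spoly n \<Longrightarrow> p + q \<in> Spoly n"
  unfolding Spoly_def by (auto dest!: subsetD[OF keys_add])

lemma Spoly_mult:
  fixes p q :: "'k::comm_semiring_1 mpoly"
  assumes "p \<in> Spoly n" "q \<in> Spoly n"
  shows "p * q \<in> Spoly n"
  unfolding Spoly_def
proof (intro CollectI ballI subsetI)
  fix \<gamma> j
  assume "\<gamma> \<in> Poly_Mapping.keys (p * q)" and j: "j \<in> Poly_Mapping.keys \<gamma>"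
  then obtain a b where "\<gamma> = a + b" "a \<in> Poly_Mapping.keys p" "b \<in> Poly_Mapping.keys q"
    using keys_mult by blast
  with j subsetD[OF keys_add[of a b]] assms show "j \<in> {..n}"
    by (auto simp: Spoly_def)
qed

lemma Spoly_sum: "finite F \<Longrightarrow> (\<And>x. x \<in> F \<Longrightarrow> f x \<in> Spoly n) \<Longrightarrow> sum f F \<in> Spoly n"
  by (induction F rule: finite_induct) (simp_all add: Spoly_add zero_in_Spoly)

lemma ideal_sum:
  assumes "is_ideal n I" "finite F" "\<And>x. x \<in> F \<Longrightarrow> f x \<in> I"
  shows "sum f F \<in> I"
  using assms(2,3) by (induction F rule: finite_induct) (use assms(1) in \<open>auto simp: is_ideal_def\<close>)

lemma ideal_mult: "is_ideal n I \<Longrightarrow> f \<in> Spoly n \<Longrightarrow> p \<in> I \<Longrightarrow> f * p \<in> I"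
  by (simp add: is_ideal_def)

lemma ideal_subset_Spoly: "is_ideal n I \<Longrightarrow> p \<in> I \<Longrightarrow> p \<in> Spoly n"
  by (auto simp: is_ideal_def)

lemma ideal_monom_multiple:
  fixes I :: "'k::comm_ring_1 mpoly set"
  assumes "is_ideal n I" "monom 1 \<delta> \<in> I" "exp_dvd \<delta> \<gamma>" "Poly_Mapping.keys \<gamma> \<subseteq> {..n}"
  shows "monom c \<gamma> \<in> I"
proof -
  have "monom c (\<gamma> - \<delta>) \<in> Spoly n"
    using assms(4) keys_diff_subset[of \<gamma> \<delta>] by (intro monom_in_Spoly) blast
  then have "monom c (\<gamma> - \<delta>) * monom 1 \<delta> \<in> I"
    by (rule ideal_mult[OF assms(1) _ assms(2)])
  then show ?thesis
    using exp_dvd_add_diff[OF assms(3)] by (simp add: monom_mult add.commute)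
qed

lemma monomial_ideal_iff:
  fixes I :: "'k::comm_ring_1 mpoly set"
  assumes "monomial_ideal n I"
  shows "p \<in> I \<longleftrightarrow> (\<forall>\<alpha>\<in>Poly_Mapping.keys p. monom 1 \<alpha> \<in> I)"
proof
  assume mons: "\<forall>\<alpha>\<in>Poly_Mapping.keys p. monom 1 \<alpha> \<in> I"
  have ideal: "is_ideal n I"
    using assms by (simp add: monomial_ideal_def)
  have "monom c \<alpha> \<in> I" if "\<alpha> \<in> Poly_Mapping.keys p" for c \<alpha>
  proof (rule ideal_monom_multiple[OF ideal])
    show "monom 1 \<alpha> \<in> I"
      using mons that by blast
    then show "Poly_Mapping.keys \<alpha> \<subseteq> {..n}"
      using ideal_subset_Spoly[OF ideal] monom_1_in_Spoly_iff by blast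
  qed (simp add: exp_dvd_def)
  then have "(\<Sum>\<alpha>\<in>Poly_Mapping.keys p. monom (Poly_Mapping.lookup p \<alpha>) \<alpha>) \<in> I"
    by (intro ideal_sum[OF ideal]) auto
  then show "p \<in> I"
    by (simp add: sum_monom_keys)
qed (use assms in \<open>auto simp: monomial_ideal_def\<close>)


section \<open>Hilbert functions of monomial ideals\<close>

interpretation mv: vector_space "\<lambda>c (p::'k::field mpoly). monom c 0 * p"
  by unfold_locales
    (simp_all add: distrib_left distrib_right monom_add monom_mult mult.assoc[symmetric],
     simp add: monom_def)

lemma lin_indep_imp_independent:
  fixes B :: "'k::field mpoly set"
  assumes fin: "finite B" and li: "lin_indep B"
  shows "mv.independent B"
  unfolding mv.independent_explicit_finite_subsets
proof (intro allI impI ballI)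
  fix S u v
  assume S: "S \<subseteq> B" "finite S" and z: "(\<Sum>v\<in>S. monom (u v) 0 * v) = 0" and v: "v \<in> S"
  define c where "c = (\<lambda>b. if b \<in> S then u b else 0)"
  have "(\<Sum>b\<in>B. monom (c b) 0 * b) = (\<Sum>b\<in>S. monom (c b) 0 * b)"
    by (rule sum.mono_neutral_right[OF fin S(1)]) (auto simp: c_def monom_def)
  also have "\<dots> = 0"
    using z by (simp add: c_def)
  finally have "c v = 0"
    using li v S by (auto simp: lin_indep_def)
  with v show "u v = 0"
    by (simp add: c_def)
qed

lemma lin_indep_monoms:
  assumes "finite M"
  shows "lin_indep (monom (1::'k::field) ` M)"
  unfolding lin_indep_def
proof (intro allI impI ballI)
  fix c :: "'k mpoly \<Rightarrow> 'k" and b :: "'k mpoly"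
  assume z: "(\<Sum>b\<in>monom 1 ` M. monom (c b) 0 * b) = 0" and b: "b \<in> monom 1 ` M"
  have inj: "inj_on (monom (1::'k)) M"
    using inj_monom_1 by (rule inj_on_subset) simp
  have "(\<Sum>\<alpha>\<in>M. monom (c (monom 1 \<alpha>)) \<alpha>) = 0"
    using z by (simp add: sum.reindex[OF inj] monom_mult)
  then have "Poly_Mapping.lookup (\<Sum>\<alpha>\<in>M. monom (c (monom 1 \<alpha>)) \<alpha>) \<gamma> = 0" for \<gamma>
    by simp
  then have "(\<Sum>\<alpha>\<in>M. if \<gamma> = \<alpha> then c (monom 1 \<alpha>) else 0) = 0" for \<gamma>
    by (simp add: lookup_sum lookup_monom)
  then have "c (monom 1 \<gamma>) = 0" if "\<gamma> \<in> M" for \<gamma>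
    using that sum.delta'[OF assms] by metis
  with b show "c b = 0"
    by auto
qed

lemma kdim_monomial_span:
  assumes fin: "finite M"
  shows "kdim {p :: 'k::field mpoly. Poly_Mapping.keys p \<subseteq> M} = card M"
proof -
  let ?V = "{p :: 'k mpoly. Poly_Mapping.keys p \<subseteq> M}"
  let ?S = "{card B |B. finite B \<and> B \<subseteq> ?V \<and> lin_indep B}"
  have card_M: "card (monom (1::'k) ` M) = card M"
    by (rule card_image[OF inj_on_subset[OF inj_monom_1]]) simp
  have V_span: "?V \<subseteq> mv.span (monom 1 ` M)"
  proof
    fix p assume "p \<in> ?V"
    then have "(\<Sum>\<alpha>\<in>Poly_Mapping.keys p. monom (Poly_Mapping.lookup p \<alpha>) 0 * monom 1 \<alpha>)
        \<in> mv.span (monom 1 ` M)"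
      by (intro mv.span_sum mv.span_scale mv.span_base) auto
    then show "p \<in> mv.span (monom 1 ` M)"
      by (simp add: monom_mult sum_monom_keys)
  qed
  have ub: "x \<le> card M" if "x \<in> ?S" for x
  proof -
    from that obtain B where B: "x = card B" "finite B" "B \<subseteq> ?V" "lin_indep B"
      by blast
    then have "card B \<le> card (monom (1::'k) ` M)"
      using mv.independent_span_bound[OF finite_imageI[OF fin] lin_indep_imp_independent] V_span
      by blast
    then show ?thesis
      using B card_M by simp
  qed
  have "card M \<in> ?S"
    using fin lin_indep_monoms[OF fin] card_M
    by (auto simp: keys_monom intro!: exI[of _ "monom 1 ` M"])
  moreover have "finite ?S"
    by (rule finite_subset[of _ "{..card M}"]) (use ub in auto)
  ultimately show ?thesis
    unfolding kdim_def by (intro Max_eqI) (use ub in auto)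
qed

definition Mons :: "nat \<Rightarrow> nat \<Rightarrow> (nat \<Rightarrow>\<^sub>0 nat) set" where
  "Mons n t = {\<alpha>. Poly_Mapping.keys \<alpha> \<subseteq> {..n} \<and> mdeg \<alpha> = t}"

definition Mons_in :: "nat \<Rightarrow> ('k::zero_neq_one) mpoly set \<Rightarrow> nat \<Rightarrow> (nat \<Rightarrow>\<^sub>0 nat) set" where
  "Mons_in n I t = {\<alpha> \<in> Mons n t. monom (1::'k) \<alpha> \<in> I}"

definition pm_of_mset :: "nat multiset \<Rightarrow> (nat \<Rightarrow>\<^sub>0 nat)" where
  "pm_of_mset M = Abs_poly_mapping (count M)"

lemma lookup_pm_of_mset [simp]: "Poly_Mapping.lookup (pm_of_mset M) = count M"
proof -
  have "{x. count M x \<noteq> 0} = set_mset M"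
    by (auto simp: not_in_iff[symmetric])
  then show ?thesis
    by (simp add: pm_of_mset_def)
qed

lemma keys_pm_of_mset [simp]: "Poly_Mapping.keys (pm_of_mset M) = set_mset M"
  by (auto simp: in_keys_iff)

lemma inj_pm_of_mset: "inj pm_of_mset"
  by (rule injI) (metis lookup_pm_of_mset multiset_eqI)

lemma Mons_eq_image_multisets: "Mons n t = pm_of_mset ` multisets_of_size {..n} t"
proof (intro set_eqI iffI)
  fix \<alpha> assume \<alpha>: "\<alpha> \<in> Mons n t"
  define M where "M = Abs_multiset (Poly_Mapping.lookup \<alpha>)"
  have "finite {x. 0 < Poly_Mapping.lookup \<alpha> x}"
    using finite_lookup[of \<alpha>] by (simp add: gr0_conv_Suc)
  then have "count M = Poly_Mapping.lookup \<alpha>"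
    unfolding M_def by (rule count_Abs_multiset)
  then have M: "pm_of_mset M = \<alpha>"
    by (intro poly_mapping_eqI) simp
  have "set_mset M = Poly_Mapping.keys \<alpha>" "size M = mdeg \<alpha>"
    using M by (auto simp: in_keys_iff mdeg_def size_multiset_overloaded_eq)
  with \<alpha> M show "\<alpha> \<in> pm_of_mset ` multisets_of_size {..n} t"
    by (auto simp: Mons_def multisets_of_size_def)
qed (auto simp: Mons_def multisets_of_size_def in_keys_iff mdeg_def size_multiset_overloaded_eq)

lemma finite_Mons [simp]: "finite (Mons n t)"
  unfolding Mons_eq_image_multisets by (intro finite_imageI finite_multisets_of_size) simp

lemma card_Mons: "card (Mons n t) = (t + n) choose n"
proof -
  have "card (Mons n t) = card (multisets_of_size {..n} t)"
    unfolding Mons_eq_image_multisets by (rule card_image) (rule inj_on_subset[OF inj_pm_of_mset], simp)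
  also have "\<dots> = (t + n) choose t"
    by (simp add: card_multisets_of_size add.commute)
  finally show ?thesis
    by (simp add: binomial_symmetric[of t "t + n"])
qed

lemma real_card_Mons: "real (card (Mons n s)) = (real s + real n) gchoose n"
  by (simp add: card_Mons binomial_gbinomial)

lemma Mons_in_subset: "Mons_in n I t \<subseteq> Mons n t"
  by (auto simp: Mons_in_def)

lemma hilbert_fn_monomial_ideal:
  fixes I :: "'k::field mpoly set"
  assumes "monomial_ideal n I"
  shows "hilbert_fn n I t = card (Mons n t) - card (Mons_in n I t)"
proof -
  have Shom: "Shom n t = {p. Poly_Mapping.keys p \<subseteq> Mons n t}"
    by (auto simp: Shom_def Spoly_def Mons_def)
  have "I \<inter> Shom n t = {p. Poly_Mapping.keys p \<subseteq> Mons_in n I t}"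
    unfolding Shom Mons_in_def using monomial_ideal_iff[OF assms] by blast
  moreover have "finite (Mons_in n I t)"
    using finite_subset[OF Mons_in_subset] by simp
  ultimately show ?thesis
    unfolding hilbert_fn_def Shom by (simp add: kdim_monomial_span)
qed

lemma hilbert_fn_monomial_ideal_real:
  fixes I :: "'k::field mpoly set"
  assumes "monomial_ideal n I"
  shows "real (hilbert_fn n I t) = real (card (Mons n t)) - real (card (Mons_in n I t))"
  using hilbert_fn_monomial_ideal[OF assms] card_mono[OF finite_Mons Mons_in_subset[of n I t]]
  by (simp add: of_nat_diff)

section \<open>Borel moves\<close>

lemma borel_move:
  fixes I :: "'k::comm_ring_1 mpoly set"
  assumes B: "borel_fixed n I" and \<alpha>: "monom 1 \<alpha> \<in> I" and ij: "i < j"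
    and k: "k \<le> Poly_Mapping.lookup \<alpha> j"
  shows "monom 1 (\<alpha> - Poly_Mapping.single j k + Poly_Mapping.single i k) \<in> I"
  using k
proof (induction k)
  case 0
  then show ?case
    using \<alpha> by simp
next
  case (Suc k)
  let ?\<alpha> = "\<alpha> - Poly_Mapping.single j k + Poly_Mapping.single i k"
  have "0 < Poly_Mapping.lookup ?\<alpha> j"
    using Suc.prems ij by (simp add: lookup_add lookup_minus lookup_single when_def)
  then have "monom 1 (?\<alpha> - Poly_Mapping.single j 1 + Poly_Mapping.single i 1) \<in> I"
    using B Suc ij unfolding borel_fixed_def by simp
  moreover have "?\<alpha> - Poly_Mapping.single j 1 + Poly_Mapping.single i 1
      = \<alpha> - Poly_Mapping.single j (Suc k) + Poly_Mapping.single i (Suc k)"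
    using Suc.prems ij
    by (intro poly_mapping_eqI) (simp add: lookup_add lookup_minus lookup_single when_def)
  ultimately show ?case
    by simp
qed

definition gathered_at :: "nat \<Rightarrow> nat \<Rightarrow> (nat \<Rightarrow>\<^sub>0 nat) \<Rightarrow> (nat \<Rightarrow>\<^sub>0 nat) \<Rightarrow> bool" where
  "gathered_at i m \<alpha> \<gamma> \<longleftrightarrow>
     (\<forall>j<i. Poly_Mapping.lookup \<gamma> j = Poly_Mapping.lookup \<alpha> j) \<and>
     Poly_Mapping.lookup \<gamma> i = (\<Sum>l\<in>{i..m}. Poly_Mapping.lookup \<alpha> l) \<and>
     (\<forall>j>i. Poly_Mapping.lookup \<gamma> j = 0)"

lemma gathered_at_trivial:
  assumes "Poly_Mapping.keys \<alpha> \<subseteq> {..m}" "m \<le> i" "gathered_at i m \<alpha> \<gamma>"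
  shows "\<gamma> = \<alpha>"
proof (rule poly_mapping_eqI)
  fix j
  have "Poly_Mapping.lookup \<alpha> j = 0" if "m < j" for j
    using lookup_beyond_keys[OF assms(1) that] .
  moreover have "(\<Sum>l\<in>{i..m}. Poly_Mapping.lookup \<alpha> l) = Poly_Mapping.lookup \<alpha> i"
    using assms(2) calculation by (cases "m = i") auto
  ultimately show "Poly_Mapping.lookup \<gamma> j = Poly_Mapping.lookup \<alpha> j"
    using assms(2,3) by (cases j i rule: linorder_cases) (auto simp: gathered_at_def)
qed

lemma gathered_at_Suc:
  assumes keys: "Poly_Mapping.keys \<alpha> \<subseteq> {..Suc m}" and i: "i \<le> m"
    and \<gamma>: "gathered_at i (Suc m) \<alpha> \<gamma>"
  defines "c \<equiv> Poly_Mapping.lookup \<alpha> (Suc m)"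
  defines "\<alpha>' \<equiv> \<alpha> - Poly_Mapping.single (Suc m) c + Poly_Mapping.single i c"
  shows "Poly_Mapping.keys \<alpha>' \<subseteq> {..m}" and "gathered_at i m \<alpha>' \<gamma>"
proof -
  have lookup_\<alpha>': "Poly_Mapping.lookup \<alpha>' j =
      (if j = Suc m then 0 else if j = i then Poly_Mapping.lookup \<alpha> j + c else Poly_Mapping.lookup \<alpha> j)"
    for j
    using i by (simp add: \<alpha>'_def c_def lookup_add lookup_minus lookup_single when_def)
  show "Poly_Mapping.keys \<alpha>' \<subseteq> {..m}"
  proof
    fix j assume "j \<in> Poly_Mapping.keys \<alpha>'"
    then have "j \<noteq> Suc m" "j = i \<or> j \<in> Poly_Mapping.keys \<alpha>"
      by (auto simp: in_keys_iff lookup_\<alpha>' split: if_splits)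
    then show "j \<in> {..m}"
      using keys i by (auto simp: le_Suc_eq)
  qed
  have "(\<Sum>l\<in>{i..m}. Poly_Mapping.lookup \<alpha>' l)
      = (\<Sum>l\<in>{i..m}. Poly_Mapping.lookup \<alpha> l + (if l = i then c else 0))"
    by (rule sum.cong) (auto simp: lookup_\<alpha>')
  also have "\<dots> = (\<Sum>l\<in>{i..m}. Poly_Mapping.lookup \<alpha> l) + c"
    using i by (simp add: sum.distrib)
  finally have sum_\<alpha>': "(\<Sum>l\<in>{i..m}. Poly_Mapping.lookup \<alpha>' l) = Poly_Mapping.lookup \<gamma> i"
    using \<gamma> i by (simp add: gathered_at_def c_def)
  show "gathered_at i m \<alpha>' \<gamma>"
    unfolding gathered_at_def
  proof (intro conjI)
    show "\<forall>j<i. Poly_Mapping.lookup \<gamma> j = Poly_Mapping.lookup \<alpha>' j"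
      using \<gamma> i by (auto simp: gathered_at_def lookup_\<alpha>')
  qed (use sum_\<alpha>' \<gamma> in \<open>simp_all add: gathered_at_def\<close>)
qed

lemma borel_gather:
  fixes I :: "'k::comm_ring_1 mpoly set"
  assumes B: "borel_fixed n I"
  shows "monom 1 \<alpha> \<in> I \<Longrightarrow> Poly_Mapping.keys \<alpha> \<subseteq> {..m} \<Longrightarrow> gathered_at i m \<alpha> \<gamma> \<Longrightarrow>
    monom 1 \<gamma> \<in> I"
proof (induction m arbitrary: \<alpha>)
  case 0
  then show ?case
    using gathered_at_trivial[of \<alpha> 0 i \<gamma>] by simp
next
  case (Suc m)
  show ?case
  proof (cases "Suc m \<le> i")
    case True
    then show ?thesis
      using Suc.prems gathered_at_trivial[of \<alpha> "Suc m" i \<gamma>] by simp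
  next
    case False
    let ?c = "Poly_Mapping.lookup \<alpha> (Suc m)"
    have "monom 1 (\<alpha> - Poly_Mapping.single (Suc m) ?c + Poly_Mapping.single i ?c) \<in> I"
      using False by (intro borel_move[OF B Suc.prems(1)]) simp_all
    with gathered_at_Suc[OF Suc.prems(2) _ Suc.prems(3)] False show ?thesis
      by (intro Suc.IH) simp_all
  qed
qed

lemma borel_fixed_gather_x0_x1:
  fixes I :: "'k::comm_ring_1 mpoly set"
  assumes B: "borel_fixed n I" and \<alpha>: "monom 1 \<alpha> \<in> I" and keys: "Poly_Mapping.keys \<alpha> \<subseteq> {..n}"
  defines "a \<equiv> Poly_Mapping.lookup \<alpha> 0" and "D \<equiv> mdeg \<alpha>"
  shows "monom 1 (Poly_Mapping.single 0 D) \<in> I"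
    and "monom 1 (Poly_Mapping.single 0 a + Poly_Mapping.single 1 (D - a)) \<in> I"
proof -
  have D: "D = (\<Sum>l\<in>{0..n}. Poly_Mapping.lookup \<alpha> l)"
    using mdeg_atMost[OF keys] by (simp add: D_def atLeast0AtMost)
  also have "\<dots> = a + (\<Sum>l\<in>{1..n}. Poly_Mapping.lookup \<alpha> l)"
    by (simp add: sum.atLeast_Suc_atMost a_def)
  finally have "D - a = (\<Sum>l\<in>{1..n}. Poly_Mapping.lookup \<alpha> l)"
    by simp
  then show "monom 1 (Poly_Mapping.single 0 a + Poly_Mapping.single 1 (D - a)) \<in> I"
    by (intro borel_gather[OF B \<alpha> keys])
      (auto simp: gathered_at_def lookup_add lookup_single a_def when_def)
  show "monom 1 (Poly_Mapping.single 0 D) \<in> I"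
    using D by (intro borel_gather[OF B \<alpha> keys]) (auto simp: gathered_at_def lookup_single)
qed


lemma Mons_x0_multiples:
  assumes "a \<le> t"
  shows "{\<alpha> \<in> Mons n t. a \<le> Poly_Mapping.lookup \<alpha> 0} = (\<lambda>\<beta>. Poly_Mapping.single 0 a + \<beta>) ` Mons n (t - a)"
proof (intro set_eqI iffI)
  fix \<alpha> assume "\<alpha> \<in> {\<alpha> \<in> Mons n t. a \<le> Poly_Mapping.lookup \<alpha> 0}"
  then have \<alpha>: "\<alpha> \<in> Mons n t" "exp_dvd (Poly_Mapping.single 0 a) \<alpha>"
    by (auto simp: exp_dvd_single_iff)
  then have "\<alpha> - Poly_Mapping.single 0 a \<in> Mons n (t - a)"
    using keys_diff_subset[of \<alpha>] mdeg_diff[OF \<alpha>(2)] by (auto simp: Mons_def)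
  with exp_dvd_add_diff[OF \<alpha>(2)] show "\<alpha> \<in> (\<lambda>\<beta>. Poly_Mapping.single 0 a + \<beta>) ` Mons n (t - a)"
    by (metis image_eqI)
next
  fix \<alpha> assume "\<alpha> \<in> (\<lambda>\<beta>. Poly_Mapping.single 0 a + \<beta>) ` Mons n (t - a)"
  then obtain \<beta> where \<beta>: "\<alpha> = Poly_Mapping.single 0 a + \<beta>" "\<beta> \<in> Mons n (t - a)"
    by blast
  then have "Poly_Mapping.keys \<alpha> \<subseteq> {..n}"
    using keys_add[of "Poly_Mapping.single 0 a" \<beta>] by (auto simp: Mons_def split: if_splits)
  with \<beta> assms show "\<alpha> \<in> {\<alpha> \<in> Mons n t. a \<le> Poly_Mapping.lookup \<alpha> 0}"
    by (simp add: mdeg_add Mons_def lookup_add)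
qed

lemma card_Mons_x0_less:
  assumes "a \<le> t"
  shows "card {\<alpha> \<in> Mons n t. Poly_Mapping.lookup \<alpha> 0 < a} = card (Mons n t) - card (Mons n (t - a))"
proof -
  have "card (Mons n t) = card {\<alpha> \<in> Mons n t. Poly_Mapping.lookup \<alpha> 0 < a}
      + card {\<alpha> \<in> Mons n t. a \<le> Poly_Mapping.lookup \<alpha> 0}"
    by (subst card_Un_disjoint[symmetric]) (auto intro: arg_cong[where f = card])
  moreover have "card {\<alpha> \<in> Mons n t. a \<le> Poly_Mapping.lookup \<alpha> 0} = card (Mons n (t - a))"
    unfolding Mons_x0_multiples[OF assms] by (rule card_image) (simp add: inj_on_def)
  ultimately show ?thesis
    by simp
qed

lemma inj_on_restrict_lookup_Mons:
  "inj_on (\<lambda>\<gamma>. restrict (Poly_Mapping.lookup \<gamma>) {..<n}) (Mons n t)"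
proof (rule inj_onI)
  fix \<gamma> \<gamma>' assume "\<gamma> \<in> Mons n t" "\<gamma>' \<in> Mons n t"
    and eq: "restrict (Poly_Mapping.lookup \<gamma>) {..<n} = restrict (Poly_Mapping.lookup \<gamma>') {..<n}"
  then have keys: "Poly_Mapping.keys \<gamma> \<subseteq> {..n}" "Poly_Mapping.keys \<gamma>' \<subseteq> {..n}"
    and deg: "mdeg \<gamma> = mdeg \<gamma>'"
    by (auto simp: Mons_def)
  have below: "Poly_Mapping.lookup \<gamma> j = Poly_Mapping.lookup \<gamma>' j" if "j < n" for j
    using fun_cong[OF eq, of j] that by simp
  then have "Poly_Mapping.lookup \<gamma> n = Poly_Mapping.lookup \<gamma>' n"
    using deg mdeg_atMost[OF keys(1)] mdeg_atMost[OF keys(2)] by (simp add: lessThan_Suc_atMost[symmetric])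
  then show "\<gamma> = \<gamma>'"
    using below lookup_beyond_keys[OF keys(1)] lookup_beyond_keys[OF keys(2)]
    by (intro poly_mapping_eqI) (metis linorder_cases)
qed

lemma card_Mons_x0_x1_less:
  assumes "2 \<le> n"
  shows "card {\<gamma> \<in> Mons n t. Poly_Mapping.lookup \<gamma> 0 < D \<and> Poly_Mapping.lookup \<gamma> 1 < D}
    \<le> D * D * (t + 1) ^ (n - 2)"
proof -
  let ?H = "{\<gamma> \<in> Mons n t. Poly_Mapping.lookup \<gamma> 0 < D \<and> Poly_Mapping.lookup \<gamma> 1 < D}"
  let ?B = "\<lambda>j::nat. if j < 2 then {..<D} else {..t}"
  let ?f = "\<lambda>\<gamma>. restrict (Poly_Mapping.lookup \<gamma>) {..<n}"
  have inj: "inj_on ?f ?H"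
    using inj_on_restrict_lookup_Mons by (rule inj_on_subset) blast
  have image: "?f ` ?H \<subseteq> PiE {..<n} ?B"
  proof
    fix x assume "x \<in> ?f ` ?H"
    then obtain \<gamma> where \<gamma>: "\<gamma> \<in> ?H" "x = ?f \<gamma>"
      by blast
    have "Poly_Mapping.lookup \<gamma> j \<le> t" for j
      using \<gamma> lookup_le_mdeg[of \<gamma> j] by (auto simp: Mons_def)
    moreover have "Poly_Mapping.lookup \<gamma> j < D" if "j < 2" for j
      using \<gamma> that less_2_cases by auto
    ultimately show "x \<in> PiE {..<n} ?B"
      using \<gamma> by (auto simp: PiE_def Pi_def)
  qed
  have "card ?H = card (?f ` ?H)"
    by (rule card_image[OF inj, symmetric])
  also have "\<dots> \<le> card (PiE {..<n} ?B)"
    by (rule card_mono[OF _ image]) (simp add: finite_PiE)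
  also have "\<dots> = (\<Prod>j<n. card (?B j))"
    by (simp add: card_PiE)
  also have "\<dots> = D * D * (t + 1) ^ (n - 2)"
    using assms
  proof (induction n rule: nat_induct_at_least)
    case (Suc m)
    then have "Suc m - 2 = Suc (m - 2)"
      by simp
    with Suc show ?case
      by (simp only: prod.lessThan_Suc) (simp add: algebra_simps)
  qed (simp add: numeral_2_eq_2)
  finally show ?thesis .
qed

text \<open>Since \<open>I\<close> contains \<open>x_0^D\<close> and \<open>x_0^a x_1^(D-a)\<close> (\<open>D = deg \<alpha>\<close>, \<open>a = \<alpha>_0\<close>), a monomial
  outside \<open>I\<close> has \<open>x_0\<close>-exponent below \<open>a\<close>, or \<open>x_0\<close>- and \<open>x_1\<close>-exponents both below \<open>D\<close>.\<close>
lemma hilbert_fn_borel_fixed_le: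
  fixes I :: "'k::field mpoly set"
  assumes B: "borel_fixed n I" and \<alpha>: "monom 1 \<alpha> \<in> I" and keys: "Poly_Mapping.keys \<alpha> \<subseteq> {..n}"
    and n: "2 \<le> n" and t: "mdeg \<alpha> \<le> t"
  shows "hilbert_fn n I t \<le> card (Mons n t) - card (Mons n (t - Poly_Mapping.lookup \<alpha> 0))
      + mdeg \<alpha> * mdeg \<alpha> * (t + 1) ^ (n - 2)"
proof -
  define D where "D = mdeg \<alpha>"
  define a where "a = Poly_Mapping.lookup \<alpha> 0"
  have monomial: "monomial_ideal n I" and ideal: "is_ideal n I"
    using B by (auto simp: borel_fixed_def monomial_ideal_def)
  note gather = borel_fixed_gather_x0_x1[OF B \<alpha> keys, folded a_def D_def]
  let ?L = "{\<gamma> \<in> Mons n t. Poly_Mapping.lookup \<gamma> 0 < a}"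
  let ?H = "{\<gamma> \<in> Mons n t. Poly_Mapping.lookup \<gamma> 0 < D \<and> Poly_Mapping.lookup \<gamma> 1 < D}"
  have cover: "Mons n t - Mons_in n I t \<subseteq> ?L \<union> ?H"
  proof
    fix \<gamma> assume \<gamma>: "\<gamma> \<in> Mons n t - Mons_in n I t"
    have not_dvd: "\<not> exp_dvd \<delta> \<gamma>" if "monom 1 \<delta> \<in> I" for \<delta>
      using \<gamma> ideal_monom_multiple[OF ideal that] by (auto simp: Mons_def Mons_in_def)
    have "\<not> D \<le> Poly_Mapping.lookup \<gamma> 0"
      using not_dvd[OF gather(1)] by (simp add: exp_dvd_single_iff)
    moreover have "\<not> (a \<le> Poly_Mapping.lookup \<gamma> 0 \<and> D - a \<le> Poly_Mapping.lookup \<gamma> 1)"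
      using not_dvd[OF gather(2)]
      by (auto simp: exp_dvd_def lookup_add lookup_single when_def split: if_splits)
    ultimately show "\<gamma> \<in> ?L \<union> ?H"
      using \<gamma> by auto
  qed
  have "card (Mons n t - Mons_in n I t) \<le> card (?L \<union> ?H)"
    by (rule card_mono[OF _ cover]) simp
  also have "\<dots> \<le> card ?L + card ?H"
    by (rule card_Un_le)
  finally have "card (Mons n t - Mons_in n I t) \<le> card ?L + card ?H" .
  moreover have "card ?L = card (Mons n t) - card (Mons n (t - a))"
    using lookup_le_mdeg[of \<alpha> 0] t by (intro card_Mons_x0_less) (simp add: a_def)
  moreover have "hilbert_fn n I t = card (Mons n t - Mons_in n I t)"
    using hilbert_fn_monomial_ideal[OF monomial]
    by (simp add: card_Diff_subset finite_subset[OF Mons_in_subset] Mons_in_subset)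
  ultimately show ?thesis
    using card_Mons_x0_x1_less[OF n, of t D] by (simp add: D_def a_def)
qed

section \<open>The Macaulay polynomial\<close>

lemma coefQ_Cons: "coefQ (x # is) (a # as) j = (if x = j then a else 0) + coefQ is as j"
proof -
  have "coefQ (x # is) (a # as) j = (if x = j then a else 0) + (\<Sum>k<length is. if (x # is) ! Suc k = j then (a # as) ! Suc k else 0)"
    unfolding coefQ_def length_Cons by (subst sum.lessThan_Suc_shift) simp
  also have "(\<Sum>k<length is. if (x # is) ! Suc k = j then (a # as) ! Suc k else 0) = coefQ is as j"
    unfolding coefQ_def nth_Cons_Suc ..
  finally show ?thesis .
qed

lemma sorted_desc_le_hd:
  fixes "is" :: "nat list"
  assumes "sorted_wrt (>) is" "is \<noteq> []" "x \<in> set is"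
  shows "x \<le> hd is"
proof (cases "is")
  case (Cons h r)
  then show ?thesis using assms by auto
qed (use assms in simp)

lemma coefQ_eq_0_above:
  fixes "is" :: "nat list"
  assumes "sorted_wrt (>) is" "is \<noteq> []" "hd is < j"
  shows "coefQ is as j = 0"
  unfolding coefQ_def
proof (rule sum.neutral, intro ballI)
  fix k assume "k \<in> {..<length is}"
  then have "is ! k \<in> set is" by simp
  then have "is ! k \<le> hd is" using sorted_desc_le_hd[OF assms(1,2)] by blast
  then show "(if is ! k = j then as ! k else 0) = 0" using assms(3) by auto
qed

lemma mQ_eq_0_above:
  assumes "hd is < i"
  shows "mQ is as i = 0"
  using assms by (simp add: mQ_def)

lemma mQ_Cons:
  assumes s: "sorted_wrt (>) is" and ne: "is \<noteq> []" and lt: "hd is < N" and i: "i \<le> N"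
  shows "mQ (N # is) (A # as) i = A + mQ is as i"
proof -
  have "mQ (N # is) (A # as) i = (\<Sum>j\<in>{i..N}. (if N = j then A else 0) + coefQ is as j)"
    by (simp add: mQ_def coefQ_Cons)
  also have "\<dots> = A + (\<Sum>j\<in>{i..N}. coefQ is as j)"
    using i by (simp add: sum.distrib)
  also have "(\<Sum>j\<in>{i..N}. coefQ is as j) = (\<Sum>j\<in>{i..hd is}. coefQ is as j)"
  proof (rule sum.mono_neutral_right)
    show "{i..hd is} \<subseteq> {i..N}" using lt by auto
    show "\<forall>j\<in>{i..N} - {i..hd is}. coefQ is as j = 0"
      using coefQ_eq_0_above[OF s ne] by auto
  qed simp
  finally show ?thesis by (simp add: mQ_def)
qed

lemma gbinomial_hockey_stick:
  fixes x :: real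
  shows "(\<Sum>i=0..k. (x + real i) gchoose (i+1)) = ((x + real k + 1) gchoose (k+1)) - 1"
proof (induction k)
  case 0
  then show ?case by simp
next
  case (Suc k)
  define a where "a = x + real k + 1"
  have a1: "x + real (Suc k) = a" by (simp add: a_def)
  have a2: "x + real (Suc k) + 1 = a + 1" by (simp add: a_def)
  have "(\<Sum>i=0..Suc k. (x + real i) gchoose (i+1))
      = (\<Sum>i=0..k. (x + real i) gchoose (i+1)) + ((x + real (Suc k)) gchoose (Suc k + 1))"
    by simp
  also have "\<dots> = (a gchoose (Suc k)) - 1 + (a gchoose (Suc (Suc k)))"
    unfolding Suc a1 by (simp add: a_def)
  also have "\<dots> = ((a + 1) gchoose (Suc (Suc k))) - 1"
    using gbinomial_Suc_Suc[of a "Suc k"] by simp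
  finally show ?case unfolding a2 by simp
qed

lemma Qpoly_Cons:
  assumes data: "macaulay_data is as" and ne: "is \<noteq> []" and top: "hd is + 2 \<le> n"
    and tA: "A \<le> t"
  shows "Qpoly ((n - 1) # is) (A # as) t =
     ((real t + real n) gchoose n) - ((real (t - A) + real n) gchoose n) + Qpoly is as (t - A)"
proof -
  have s: "sorted_wrt (>) is" using data by (simp add: macaulay_data_def)
  define h where "h = hd is"
  define g where "g = (\<lambda>(x::real) i. x gchoose (i + 1))"
  define u where "u = real (t - A)"
  have u: "u = real t - real A" using tA by (simp add: u_def)
  have n1: "Suc (n - 1) = n" using top by simp
  have mq: "mQ ((n - Suc 0) # is) (A # as) i = A + mQ is as i" if "i \<le> n - Suc 0" for i
    by (rule mQ_Cons[OF s ne _ that]) (use top in simp)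
  have "Qpoly ((n - 1) # is) (A # as) t
      = (\<Sum>i=0..n-1. g (real t + real i) i - g (real t + real i - real (A + mQ is as i)) i)"
    unfolding Qpoly_def g_def by (intro sum.cong) (simp_all add: mq)
  also have "\<dots> = (\<Sum>i=0..n-1. g (real t + real i) i - g (u + real i) i)
       + (\<Sum>i=0..n-1. g (u + real i) i - g (u + real i - real (mQ is as i)) i)"
    by (simp add: sum.distrib[symmetric] u algebra_simps)
  also have "(\<Sum>i=0..n-1. g (real t + real i) i - g (u + real i) i)
      = ((real t + real n) gchoose n) - ((u + real n) gchoose n)"
    using gbinomial_hockey_stick[of "real t" "n-1"] gbinomial_hockey_stick[of u "n-1"] top
    by (simp add: g_def sum_subtractf n1 add.assoc)
  also have "(\<Sum>i=0..n-1. g (u + real i) i - g (u + real i - real (mQ is as i)) i)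
      = (\<Sum>i=0..h. g (u + real i) i - g (u + real i - real (mQ is as i)) i)"
  proof (rule sum.mono_neutral_right)
    show "{0..h} \<subseteq> {0..n-1}" using top by (auto simp: h_def)
    show "\<forall>i\<in>{0..n - 1} - {0..h}. g (u + real i) i - g (u + real i - real (mQ is as i)) i = 0"
      by (auto simp: mQ_eq_0_above h_def)
  qed simp
  also have "\<dots> = Qpoly is as (t - A)"
    by (simp add: Qpoly_def g_def h_def u_def)
  finally show ?thesis by (simp add: u_def)
qed


lemma abs_gbinomial_le: "\<bar>(y::real) gchoose k\<bar> \<le> (\<bar>y\<bar> + real k) ^ k"
proof -
  have "\<bar>y gchoose k\<bar> \<le> \<bar>y gchoose k\<bar> * fact k"
    by (simp add: mult_le_cancel_left1)
  also have "\<dots> = \<bar>(y gchoose k) * fact k\<bar>" by (simp add: abs_mult)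
  also have "\<dots> = \<bar>\<Prod>i = 0..<k. y - real i\<bar>" by (simp add: gbinomial_mult_fact')
  also have "\<dots> = (\<Prod>i = 0..<k. \<bar>y - real i\<bar>)" by (simp add: abs_prod)
  also have "\<dots> \<le> (\<Prod>i = 0..<k. \<bar>y\<bar> + real k)"
    by (intro prod_mono) auto
  also have "\<dots> = (\<bar>y\<bar> + real k) ^ k" by simp
  finally show ?thesis .
qed

lemma gbinomial_diff_eq_sum:
  "((x::real) gchoose Suc k) - ((x - real m) gchoose Suc k) = (\<Sum>j<m. (x - real j - 1) gchoose k)"
proof (induction m)
  case 0
  then show ?case by simp
next
  case (Suc m)
  have p: "(x - real m) gchoose Suc k = ((x - real m - 1) gchoose k) + ((x - real (Suc m)) gchoose Suc k)"
    using gbinomial_Suc_Suc[of "x - real m - 1" k] by (simp add: algebra_simps)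
  show ?case using Suc p by simp
qed

lemma gbinomial_diff_bound:
  fixes s :: real
  assumes s: "0 \<le> s"
  shows "\<bar>((s + real i) gchoose Suc i) - ((s + real i - real m) gchoose Suc i)\<bar>
     \<le> real m * (real (2*i+m+1)) ^ i * (s + 1) ^ i"
proof -
  have "\<bar>((s + real i) gchoose Suc i) - ((s + real i - real m) gchoose Suc i)\<bar>
      = \<bar>\<Sum>j<m. (s + real i - real j - 1) gchoose i\<bar>" by (simp add: gbinomial_diff_eq_sum)
  also have "\<dots> \<le> (\<Sum>j<m. \<bar>(s + real i - real j - 1) gchoose i\<bar>)" by (rule sum_abs)
  also have "\<dots> \<le> (\<Sum>j<m. (real (2*i+m+1)) ^ i * (s + 1) ^ i)"
  proof (rule sum_mono)
    fix j assume j: "j \<in> {..<m}"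
    have "\<bar>s + real i - real j - 1\<bar> + real i \<le> s + real (2*i+m)"
      using j s by (auto simp: abs_if)
    also have "\<dots> \<le> real (2*i+m+1) * (s + 1)"
      using s by (simp add: algebra_simps)
    finally have b: "\<bar>s + real i - real j - 1\<bar> + real i \<le> real (2*i+m+1) * (s + 1)" .
    have "\<bar>(s + real i - real j - 1) gchoose i\<bar> \<le> (\<bar>s + real i - real j - 1\<bar> + real i) ^ i"
      by (rule abs_gbinomial_le)
    also have "\<dots> \<le> (real (2*i+m+1) * (s + 1)) ^ i"
      by (rule power_mono[OF b]) simp
    finally show "\<bar>(s + real i - real j - 1) gchoose i\<bar> \<le> (real (2*i+m+1)) ^ i * (s + 1) ^ i"
      by (simp add: power_mult_distrib)
  qed
  also have "\<dots> = real m * (real (2*i+m+1)) ^ i * (s + 1) ^ i" by simp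
  finally show ?thesis .
qed

lemma Qpoly_polynomially_bounded:
  "\<exists>K\<ge>0. \<forall>s::nat. \<bar>Qpoly is as s\<bar> \<le> K * (real s + 1) ^ (hd is)"
proof -
  define h where "h = hd is"
  define K where "K = (\<Sum>i=0..h. real (mQ is as i) * (real (2*i+mQ is as i+1)) ^ i)"
  have K0: "0 \<le> K" unfolding K_def by (intro sum_nonneg) simp
  have "\<bar>Qpoly is as s\<bar> \<le> K * (real s + 1) ^ h" for s :: nat
  proof -
    have "\<bar>Qpoly is as s\<bar> \<le> (\<Sum>i=0..h. \<bar>((real s + real i) gchoose Suc i) - ((real s + real i - real (mQ is as i)) gchoose Suc i)\<bar>)"
      unfolding Qpoly_def h_def by (simp add: sum_abs)
    also have "\<dots> \<le> (\<Sum>i=0..h. real (mQ is as i) * (real (2*i+mQ is as i+1)) ^ i * (real s + 1) ^ h)"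
    proof (rule sum_mono)
      fix i assume i: "i \<in> {0..h}"
      have "(real s + 1) ^ i \<le> (real s + 1) ^ h" using i by (intro power_increasing) auto
      then have "real (mQ is as i) * (real (2*i+mQ is as i+1)) ^ i * (real s + 1) ^ i
          \<le> real (mQ is as i) * (real (2*i+mQ is as i+1)) ^ i * (real s + 1) ^ h"
        by (intro mult_left_mono) auto
      with gbinomial_diff_bound[of "real s" i "mQ is as i"]
      show "\<bar>((real s + real i) gchoose Suc i) - ((real s + real i - real (mQ is as i)) gchoose Suc i)\<bar>
          \<le> real (mQ is as i) * (real (2*i+mQ is as i+1)) ^ i * (real s + 1) ^ h" by simp
    qed
    also have "\<dots> = K * (real s + 1) ^ h" unfolding K_def by (simp add: sum_distrib_right)
    finally show ?thesis .
  qed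
  then show ?thesis using K0 unfolding h_def by blast
qed

text \<open>For \<open>t \<ge> 2A\<close> the binomial coefficient is at least \<open>((t + 1) / 2k)^k\<close>, which exceeds
  \<open>K (t + 1)^(k-1)\<close> as soon as \<open>t + 1 > K (2k)^k\<close>.\<close>
lemma binomial_not_polynomially_bounded:
  fixes K :: real
  assumes k: "1 \<le> k"
    and H: "\<And>t. T \<le> t \<Longrightarrow> real ((t - A + k + 1) choose k) \<le> K * (real t + 1) ^ (k - 1)"
  shows False
proof -
  define c where "c = (2 * real k) ^ k"
  have c0: "0 < c" using k by (simp add: c_def)
  define t where "t = max T (2*A) + nat \<lceil>K * c\<rceil>"
  have tT: "T \<le> t" and tA: "2 * A \<le> t" by (auto simp: t_def)
  have tK: "K * c < real t + 1"
  proof -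
    have "K * c \<le> real (nat \<lceil>K * c\<rceil>)" by linarith
    also have "\<dots> \<le> real t" by (simp add: t_def)
    finally show ?thesis by simp
  qed
  define m where "m = t - A + k + 1"
  have mk: "k \<le> m" by (simp add: m_def)
  have mt: "(real t + 1) / 2 \<le> real m" using tA by (simp add: m_def)
  have kpos: "0 < real k" using k by simp
  have "(real t + 1) / (2 * real k) = ((real t + 1) / 2) / real k" by simp
  also have "\<dots> \<le> real m / real k" by (rule divide_right_mono[OF mt]) (use kpos in simp)
  finally have "((real t + 1) / (2 * real k)) \<le> real m / real k" .
  then have "((real t + 1) / (2 * real k)) ^ k \<le> (real m / real k) ^ k"
    by (rule power_mono) simp
  also have "\<dots> \<le> real (m choose k)" by (rule binomial_ge_n_over_k_pow_k[OF mk])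
  also have "\<dots> \<le> K * (real t + 1) ^ (k - 1)" using H[OF tT] by (simp add: m_def)
  finally have i1: "((real t + 1) / (2 * real k)) ^ k \<le> K * (real t + 1) ^ (k - 1)" .
  have "((real t + 1) / (2 * real k)) ^ k = (real t + 1) ^ k / c"
    by (simp add: c_def power_divide)
  also have "(real t + 1) ^ k = (real t + 1) * (real t + 1) ^ (k - 1)"
    using k by (metis Suc_diff_le diff_Suc_1 power_Suc)
  finally have "(real t + 1) * (real t + 1) ^ (k - 1) / c \<le> K * (real t + 1) ^ (k - 1)"
    using i1 by simp
  then have "(real t + 1) * (real t + 1) ^ (k - 1) \<le> (K * c) * (real t + 1) ^ (k - 1)"
    using c0 by (simp add: field_simps)
  moreover have "0 < (real t + 1) ^ (k - 1)" by simp
  ultimately have "real t + 1 \<le> K * c" by simp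
  with tK show False by simp
qed

lemma card_Mons_Suc:
  assumes "1 \<le> n"
  shows "card (Mons n (Suc s)) = card (Mons n s) + ((s + n) choose (n - 1))"
proof -
  have "card (Mons n (Suc s)) = Suc (s + n) choose Suc (n - 1)"
    using assms by (simp add: card_Mons)
  also have "\<dots> = ((s + n) choose (n - 1)) + ((s + n) choose Suc (n - 1))"
    by (rule binomial_Suc_Suc)
  finally show ?thesis
    using assms by (simp add: card_Mons)
qed

lemma card_Mons_mono: "s \<le> t \<Longrightarrow> card (Mons n s) \<le> card (Mons n t)"
  unfolding card_Mons by (rule binomial_right_mono) simp

section \<open>Divisibility by a power of \<open>x_0\<close>\<close>

lemma card_Mons_gap_le:
  fixes I :: "'k::field mpoly set"
  assumes data: "macaulay_data is as" and ne: "is \<noteq> []" and top: "hd is + 2 \<le> n"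
    and B: "borel_fixed n I" and \<alpha>: "monom 1 \<alpha> \<in> I" and keys: "Poly_Mapping.keys \<alpha> \<subseteq> {..n}"
    and hp: "real (hilbert_fn n I t) = Qpoly ((n - 1) # is) (A # as) t"
    and t: "mdeg \<alpha> \<le> t" "A \<le> t"
  shows "real (card (Mons n (t - Poly_Mapping.lookup \<alpha> 0))) - real (card (Mons n (t - A)))
    \<le> real (mdeg \<alpha> * mdeg \<alpha>) * (real t + 1) ^ (n - 2) - Qpoly is as (t - A)"
proof -
  define a where "a = Poly_Mapping.lookup \<alpha> 0"
  define D where "D = mdeg \<alpha>"
  have "hilbert_fn n I t \<le> card (Mons n t) - card (Mons n (t - a)) + D * D * (t + 1) ^ (n - 2)"
    using hilbert_fn_borel_fixed_le[OF B \<alpha> keys _ t(1)] top by (simp add: D_def a_def)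
  then have "hilbert_fn n I t + card (Mons n (t - a)) \<le> card (Mons n t) + D * D * (t + 1) ^ (n - 2)"
    using card_Mons_mono[of "t - a" t n] by linarith
  then have "real (hilbert_fn n I t + card (Mons n (t - a)))
      \<le> real (card (Mons n t) + D * D * (t + 1) ^ (n - 2))"
    by (simp only: of_nat_le_iff)
  moreover have "real (hilbert_fn n I t)
      = real (card (Mons n t)) - real (card (Mons n (t - A))) + Qpoly is as (t - A)"
    using hp Qpoly_Cons[OF data ne top t(2)] by (simp add: real_card_Mons)
  ultimately show ?thesis
    by (simp add: D_def a_def algebra_simps)
qed

lemma binomial_le_card_Mons_gap:
  assumes "a < A" "A \<le> t" "1 \<le> n"
  shows "real ((t - A + (n - 1) + 1) choose (n - 1))
    \<le> real (card (Mons n (t - a))) - real (card (Mons n (t - A)))"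
proof -
  have "card (Mons n (t - A)) + ((t - A + n) choose (n - 1)) \<le> card (Mons n (t - a))"
    using card_Mons_Suc[of n "t - A"] card_Mons_mono[of "Suc (t - A)" "t - a" n] assms
    by simp
  moreover have "t - A + (n - 1) + 1 = t - A + n"
    using assms by simp
  ultimately show ?thesis
    by (metis of_nat_add of_nat_le_iff le_diff_eq add.commute)
qed

text \<open>If \<open>\<alpha>_0 < A\<close>, the gap \<open>N(t - \<alpha>_0) - N(t - A)\<close>, where \<open>N(s) = (s + n choose n)\<close>, grows like
  \<open>t^(n-1)\<close>, but by \<open>card_Mons_gap_le\<close> it is \<open>O(t^(n-2))\<close> since \<open>Q(i_1, ...)\<close> has degree \<open>i_1 \<le> n - 2\<close>.\<close>
lemma borel_fixed_x0_power_dvd: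
  fixes I :: "'k::field mpoly set"
  assumes data: "macaulay_data is as" and ne: "is \<noteq> []" and top: "hd is + 2 \<le> n"
    and B: "borel_fixed n I" and hp: "has_hilbert_poly n I (Qpoly ((n - 1) # is) (A # as))"
    and \<alpha>: "monom 1 \<alpha> \<in> I"
  shows "A \<le> Poly_Mapping.lookup \<alpha> 0"
proof (rule ccontr)
  define D where "D = mdeg \<alpha>"
  assume "\<not> A \<le> Poly_Mapping.lookup \<alpha> 0"
  then have aA: "Poly_Mapping.lookup \<alpha> 0 < A"
    by simp
  have keys: "Poly_Mapping.keys \<alpha> \<subseteq> {..n}"
    using B \<alpha> ideal_subset_Spoly monom_1_in_Spoly_iff
    by (metis borel_fixed_def monomial_ideal_def)
  obtain t0 where t0: "\<And>t. t0 \<le> t \<Longrightarrow> real (hilbert_fn n I t) = Qpoly ((n - 1) # is) (A # as) t"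
    using hp by (auto simp: has_hilbert_poly_def)
  obtain K where K: "0 \<le> K" "\<And>s. \<bar>Qpoly is as s\<bar> \<le> K * (real s + 1) ^ hd is"
    using Qpoly_polynomially_bounded by blast
  show False
  proof (rule binomial_not_polynomially_bounded[of "n - 1" "max t0 (max D A)" A "real (D * D) + K"])
    fix t assume "max t0 (max D A) \<le> t"
    then have t: "t0 \<le> t" "D \<le> t" "A \<le> t"
      by auto
    have "- Qpoly is as (t - A) \<le> K * (real (t - A) + 1) ^ hd is"
      using K(2)[of "t - A"] by simp
    also have "\<dots> \<le> K * (real t + 1) ^ (n - 2)"
    proof (rule mult_left_mono[OF _ K(1)])
      have "(real (t - A) + 1) ^ hd is \<le> (real t + 1) ^ hd is"
        by (rule power_mono) (use t in auto)
      also have "\<dots> \<le> (real t + 1) ^ (n - 2)"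
        by (rule power_increasing) (use top in auto)
      finally show "(real (t - A) + 1) ^ hd is \<le> (real t + 1) ^ (n - 2)" .
    qed
    moreover have "real ((t - A + (n - 1) + 1) choose (n - 1))
        \<le> real (card (Mons n (t - Poly_Mapping.lookup \<alpha> 0))) - real (card (Mons n (t - A)))"
      using binomial_le_card_Mons_gap[OF aA t(3)] top by simp
    moreover have "(real (D * D) + K) * (real t + 1) ^ (n - 1 - 1)
        = real (D * D) * (real t + 1) ^ (n - 2) + K * (real t + 1) ^ (n - 2)"
      by (simp add: distrib_right numeral_2_eq_2)
    ultimately show "real ((t - A + (n - 1) + 1) choose (n - 1))
        \<le> (real (D * D) + K) * (real t + 1) ^ (n - 1 - 1)"
      using card_Mons_gap_le[OF data ne top B \<alpha> keys t0[OF t(1)] t(2)[unfolded D_def] t(3)]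
      unfolding D_def by linarith
  qed (use top in simp)
qed


section \<open>Colon ideals by monomials\<close>

definition colon_monom :: "nat \<Rightarrow> (nat \<Rightarrow>\<^sub>0 nat) \<Rightarrow> 'k::comm_ring_1 mpoly set \<Rightarrow> 'k mpoly set" where
  "colon_monom n e I = {g \<in> Spoly n. monom 1 e * g \<in> I}"

lemma monom_1_in_colon_monom_iff:
  "monom (1::'k::comm_ring_1) \<beta> \<in> colon_monom n e I \<longleftrightarrow>
    Poly_Mapping.keys \<beta> \<subseteq> {..n} \<and> monom 1 (e + \<beta>) \<in> I"
  by (simp add: colon_monom_def monom_1_in_Spoly_iff monom_mult)

lemma is_ideal_colon_monom:
  fixes I :: "'k::comm_ring_1 mpoly set"
  assumes I: "is_ideal n I"
  shows "is_ideal n (colon_monom n e I)"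
  unfolding is_ideal_def
proof (intro conjI ballI)
  show "colon_monom n e I \<subseteq> Spoly n" "0 \<in> colon_monom n e I"
    using I by (auto simp: colon_monom_def is_ideal_def zero_in_Spoly)
next
  fix p q :: "'k mpoly" assume "p \<in> colon_monom n e I" "q \<in> colon_monom n e I"
  then show "p + q \<in> colon_monom n e I"
    using I by (auto simp: colon_monom_def is_ideal_def distrib_left intro: Spoly_add)
next
  fix f p :: "'k mpoly" assume f: "f \<in> Spoly n" and p: "p \<in> colon_monom n e I"
  then have "f * (monom 1 e * p) \<in> I"
    using I by (auto simp: colon_monom_def intro: ideal_mult)
  with f p show "f * p \<in> colon_monom n e I"
    by (auto simp: colon_monom_def mult.left_commute intro: Spoly_mult)
qed

lemma saturated_colon_monom:
  fixes I :: "'k::comm_ring_1 mpoly set"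
  assumes sat: "saturated n I" and e: "Poly_Mapping.keys e \<subseteq> {..n}"
  shows "saturated n (colon_monom n e I)"
  unfolding saturated_def
proof (intro ballI impI)
  fix f :: "'k mpoly"
  assume f: "f \<in> Spoly n" and "\<exists>N. \<forall>j\<le>n. monom 1 (Poly_Mapping.single j N) * f \<in> colon_monom n e I"
  then obtain N where "\<forall>j\<le>n. monom 1 (Poly_Mapping.single j N) * (monom 1 e * f) \<in> I"
    by (auto simp: colon_monom_def mult.left_commute)
  moreover have "monom 1 e * f \<in> Spoly n"
    using e f by (intro Spoly_mult monom_in_Spoly)
  ultimately have "monom 1 e * f \<in> I"
    using sat unfolding saturated_def by blast
  with f show "f \<in> colon_monom n e I"
    by (simp add: colon_monom_def)
qed

lemma monomial_ideal_colon_monom: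
  fixes I :: "'k::comm_ring_1 mpoly set"
  assumes I: "monomial_ideal n I"
  shows "monomial_ideal n (colon_monom n e I)"
  unfolding monomial_ideal_def
proof (intro conjI ballI)
  show "is_ideal n (colon_monom n e I)"
    using I by (simp add: monomial_ideal_def is_ideal_colon_monom)
next
  fix g \<beta> assume g: "g \<in> colon_monom n e I" and \<beta>: "\<beta> \<in> Poly_Mapping.keys g"
  then have "monom 1 (e + \<beta>) \<in> I"
    using I keys_monom_1_mult[of e g] by (auto simp: colon_monom_def monomial_ideal_def)
  moreover have "Poly_Mapping.keys \<beta> \<subseteq> {..n}"
    using g \<beta> by (auto simp: colon_monom_def Spoly_def)
  ultimately show "monom 1 \<beta> \<in> colon_monom n e I"
    by (simp add: monom_1_in_colon_monom_iff)
qed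

lemma borel_fixed_colon_monom:
  fixes I :: "'k::comm_ring_1 mpoly set"
  assumes B: "borel_fixed n I"
  shows "borel_fixed n (colon_monom n e I)"
  unfolding borel_fixed_def
proof (intro conjI allI impI)
  show "monomial_ideal n (colon_monom n e I)"
    using B by (simp add: borel_fixed_def monomial_ideal_colon_monom)
next
  fix \<beta> i j
  assume \<beta>: "monom 1 \<beta> \<in> colon_monom n e I" and ij: "i < j" and pos: "0 < Poly_Mapping.lookup \<beta> j"
  let ?\<beta>' = "\<beta> - Poly_Mapping.single j 1 + Poly_Mapping.single i 1"
  have keys: "Poly_Mapping.keys \<beta> \<subseteq> {..n}" and I: "monom 1 (e + \<beta>) \<in> I"
    using \<beta> by (auto simp: monom_1_in_colon_monom_iff)
  have "monom 1 (e + \<beta> - Poly_Mapping.single j 1 + Poly_Mapping.single i 1) \<in> I"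
    using B I ij pos unfolding borel_fixed_def by (simp add: lookup_add)
  moreover have "e + \<beta> - Poly_Mapping.single j 1 + Poly_Mapping.single i 1 = e + ?\<beta>'"
    using pos by (intro poly_mapping_eqI) (auto simp: lookup_add lookup_minus lookup_single when_def)
  moreover have "Poly_Mapping.keys ?\<beta>' \<subseteq> {..n}"
  proof -
    have "j \<in> Poly_Mapping.keys \<beta>"
      using pos by (simp add: in_keys_iff)
    then have "j \<le> n"
      using keys by auto
    moreover have "Poly_Mapping.keys ?\<beta>' \<subseteq> insert i (Poly_Mapping.keys \<beta>)"
      using keys_add[of "\<beta> - Poly_Mapping.single j 1" "Poly_Mapping.single i 1"]
        keys_diff_subset[of \<beta> "Poly_Mapping.single j 1"] by auto
    ultimately show ?thesis
      using keys ij by auto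
  qed
  ultimately show "monom 1 ?\<beta>' \<in> colon_monom n e I"
    by (simp add: monom_1_in_colon_monom_iff)
qed

lemma monomial_ideal_eq_monom_mult_colon:
  fixes I :: "'k::comm_ring_1 mpoly set"
  assumes I: "monomial_ideal n I" and dvd: "\<And>\<alpha>. monom 1 \<alpha> \<in> I \<Longrightarrow> exp_dvd e \<alpha>"
  shows "I = {monom 1 e * g | g. g \<in> colon_monom n e I}"
proof (intro set_eqI iffI)
  fix p assume p: "p \<in> I"
  define g where "g = (\<Sum>\<alpha>\<in>Poly_Mapping.keys p. monom (Poly_Mapping.lookup p \<alpha>) (\<alpha> - e))"
  have p_Spoly: "p \<in> Spoly n"
    using I p by (auto simp: monomial_ideal_def dest: ideal_subset_Spoly)
  have "monom 1 e * g = (\<Sum>\<alpha>\<in>Poly_Mapping.keys p. monom (Poly_Mapping.lookup p \<alpha>) (e + (\<alpha> - e)))"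
    by (simp add: g_def sum_distrib_left monom_mult)
  also have "\<dots> = p"
    using I p dvd exp_dvd_add_diff by (simp add: monomial_ideal_def sum_monom_keys)
  finally have eg: "monom 1 e * g = p" .
  have "Poly_Mapping.keys (\<alpha> - e) \<subseteq> {..n}" if "\<alpha> \<in> Poly_Mapping.keys p" for \<alpha>
    using p_Spoly that keys_diff_subset[of \<alpha> e] by (auto simp: Spoly_def)
  then have "g \<in> Spoly n"
    unfolding g_def by (intro Spoly_sum monom_in_Spoly) simp_all
  with eg p show "p \<in> {monom 1 e * g | g. g \<in> colon_monom n e I}"
    by (auto simp: colon_monom_def)
qed (auto simp: colon_monom_def)

lemma Mons_in_colon_x0_power:
  fixes I :: "'k::comm_ring_1 mpoly set"
  assumes dvd: "\<And>\<alpha>. monom 1 \<alpha> \<in> I \<Longrightarrow> A \<le> Poly_Mapping.lookup \<alpha> 0" and t: "A \<le> t"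
  shows "Mons_in n I t =
    (\<lambda>\<beta>. Poly_Mapping.single 0 A + \<beta>) ` Mons_in n (colon_monom n (Poly_Mapping.single 0 A) I) (t - A)"
proof -
  have "Mons_in n I t = {\<alpha> \<in> {\<alpha> \<in> Mons n t. A \<le> Poly_Mapping.lookup \<alpha> 0}. monom 1 \<alpha> \<in> I}"
    using dvd by (auto simp: Mons_in_def)
  also have "\<dots> = (\<lambda>\<beta>. Poly_Mapping.single 0 A + \<beta>) ` {\<beta> \<in> Mons n (t - A). monom 1 (Poly_Mapping.single 0 A + \<beta>) \<in> I}"
    unfolding Mons_x0_multiples[OF t] by auto
  finally show ?thesis
    by (auto simp: Mons_in_def Mons_def monom_1_in_colon_monom_iff)
qed

lemma has_hilbert_poly_colon_x0_power:
  fixes I :: "'k::field mpoly set"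
  assumes data: "macaulay_data is as" and ne: "is \<noteq> []" and top: "hd is + 2 \<le> n"
    and I: "monomial_ideal n I" and dvd: "\<And>\<alpha>. monom 1 \<alpha> \<in> I \<Longrightarrow> A \<le> Poly_Mapping.lookup \<alpha> 0"
    and hp: "has_hilbert_poly n I (Qpoly ((n - 1) # is) (A # as))"
  shows "has_hilbert_poly n (colon_monom n (Poly_Mapping.single 0 A) I) (Qpoly is as)"
proof -
  let ?J = "colon_monom n (Poly_Mapping.single 0 A) I"
  obtain t0 where t0: "\<And>t. t0 \<le> t \<Longrightarrow> real (hilbert_fn n I t) = Qpoly ((n - 1) # is) (A # as) t"
    using hp by (auto simp: has_hilbert_poly_def)
  have "real (hilbert_fn n ?J s) = Qpoly is as s" if s: "t0 \<le> s" for s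
  proof -
    have "card (Mons_in n I (s + A)) = card (Mons_in n ?J s)"
      using Mons_in_colon_x0_power[where I = I and A = A and t = "s + A" and n = n] dvd
      by (simp add: card_image inj_on_def)
    then have "real (hilbert_fn n I (s + A)) - real (hilbert_fn n ?J s)
        = real (card (Mons n (s + A))) - real (card (Mons n s))"
      using I monomial_ideal_colon_monom[OF I] by (simp add: hilbert_fn_monomial_ideal_real)
    moreover have "real (hilbert_fn n I (s + A))
        = real (card (Mons n (s + A))) - real (card (Mons n s)) + Qpoly is as s"
      using t0[of "s + A"] s Qpoly_Cons[OF data ne top, of A "s + A"] by (simp add: real_card_Mons)
    ultimately show ?thesis
      by simp
  qed
  then show ?thesis
    by (auto simp: has_hilbert_poly_def)
qed

lemma borel_fixed_x0_power_mult:
  fixes J :: "'k::comm_ring_1 mpoly set"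
  assumes I: "is_ideal n I" and J: "borel_fixed n J"
    and I_eq: "I = {monom 1 (Poly_Mapping.single 0 A) * g | g. g \<in> J}"
  shows "borel_fixed n I"
proof -
  define e where "e = Poly_Mapping.single (0::nat) A"
  have J_monomial: "monomial_ideal n J"
    using J by (simp add: borel_fixed_def)
  have monoms_I: "\<exists>\<beta>. \<alpha> = e + \<beta> \<and> monom 1 \<beta> \<in> J" if "p \<in> I" "\<alpha> \<in> Poly_Mapping.keys p" for p \<alpha>
  proof -
    from that(1) obtain g where g: "p = monom 1 e * g" "g \<in> J"
      by (auto simp: I_eq e_def)
    with that(2) obtain \<beta> where "\<alpha> = e + \<beta>" "\<beta> \<in> Poly_Mapping.keys g"
      by (auto simp: keys_monom_1_mult)
    with J_monomial g(2) show ?thesis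
      by (auto simp: monomial_ideal_def)
  qed
  have in_I: "monom 1 (e + \<beta>) \<in> I" if "monom 1 \<beta> \<in> J" for \<beta>
    using that by (auto simp: I_eq e_def monom_mult intro!: exI[of _ "monom 1 \<beta>"])
  have "monomial_ideal n I"
    using I monoms_I in_I by (auto simp: monomial_ideal_def)
  moreover have "monom 1 (\<alpha> - Poly_Mapping.single j 1 + Poly_Mapping.single i 1) \<in> I"
    if \<alpha>: "monom 1 \<alpha> \<in> I" and ij: "i < j" and pos: "0 < Poly_Mapping.lookup \<alpha> j" for \<alpha> i j
  proof -
    obtain \<beta> where \<beta>: "\<alpha> = e + \<beta>" "monom 1 \<beta> \<in> J"
      using monoms_I[OF \<alpha>] by (auto simp: keys_monom)
    then have "0 < Poly_Mapping.lookup \<beta> j"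
      using pos ij by (simp add: e_def lookup_add lookup_single)
    then have "monom 1 (\<beta> - Poly_Mapping.single j 1 + Poly_Mapping.single i 1) \<in> J"
      using J \<beta>(2) ij unfolding borel_fixed_def by blast
    moreover have "e + (\<beta> - Poly_Mapping.single j 1 + Poly_Mapping.single i 1)
        = \<alpha> - Poly_Mapping.single j 1 + Poly_Mapping.single i 1"
      using ij \<beta>(1) by (intro poly_mapping_eqI) (simp add: e_def lookup_add lookup_minus lookup_single when_def)
    ultimately show ?thesis
      using in_I by metis
  qed
  ultimately show ?thesis
    unfolding borel_fixed_def by blast
qed


theorem corollary2p3:
  fixes n A :: nat and "is" as :: "nat list" and I :: "('k::field_char_0) mpoly set"
  assumes alg_closed: "\<forall>p::'k poly. 0 < degree p \<longrightarrow> (\<exists>x. poly p x = 0)"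
    and data: "macaulay_data is as" and ne: "is \<noteq> []" and top: "hd is + 2 \<le> n"
    and Apos: "0 < A"
    and I_hom: "homogeneous_ideal n I" and I_sat: "saturated n I"
    and I_hp: "has_hilbert_poly n I (Qpoly ((n - 1) # is) (A # as))"
  shows "borel_fixed n I \<longleftrightarrow>
    (\<exists>J. is_ideal n J \<and> saturated n J \<and> borel_fixed n J \<and> has_hilbert_poly n J (Qpoly is as)
       \<and> I = {monom 1 (Poly_Mapping.single 0 A) * g | g. g \<in> J})"
proof
  assume B: "borel_fixed n I"
  define J where "J = colon_monom n (Poly_Mapping.single 0 A) I"
  have monomial: "monomial_ideal n I"
    using B by (simp add: borel_fixed_def)
  have dvd: "A \<le> Poly_Mapping.lookup \<alpha> 0" if "monom 1 \<alpha> \<in> I" for \<alpha>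
    using borel_fixed_x0_power_dvd[OF data ne top B I_hp that] .
  have "is_ideal n J" "borel_fixed n J"
    using B monomial borel_fixed_colon_monom
    by (auto simp: J_def monomial_ideal_def is_ideal_colon_monom)
  moreover have "saturated n J"
    unfolding J_def by (rule saturated_colon_monom[OF I_sat]) simp
  moreover have "has_hilbert_poly n J (Qpoly is as)"
    unfolding J_def by (rule has_hilbert_poly_colon_x0_power[OF data ne top monomial dvd I_hp])
  moreover have "I = {monom 1 (Poly_Mapping.single 0 A) * g | g. g \<in> J}"
    unfolding J_def using dvd
    by (intro monomial_ideal_eq_monom_mult_colon[OF monomial]) (simp add: exp_dvd_single_iff)
  ultimately show "\<exists>J. is_ideal n J \<and> saturated n J \<and> borel_fixed n J \<and> has_hilbert_poly n J (Qpoly is as)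
       \<and> I = {monom 1 (Poly_Mapping.single 0 A) * g | g. g \<in> J}"
    by blast
next
  assume "\<exists>J. is_ideal n J \<and> saturated n J \<and> borel_fixed n J \<and> has_hilbert_poly n J (Qpoly is as)
       \<and> I = {monom 1 (Poly_Mapping.single 0 A) * g | g. g \<in> J}"
  then show "borel_fixed n I"
    using I_hom borel_fixed_x0_power_mult by (auto simp: homogeneous_ideal_def)
qed

end
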